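(* For every $\epsilon>0$ there exists $\delta>0$ such that, for $k<e^{\delta n}$ (where $n$ is the number of variables), no deterministic online width-cut-$k$ algorithm can achieve an asymptotic approximation ratio of $3/4+\epsilon$ for unweighted exact max-2-sat with input model 2.
   Context: Unweighted exact max-2-sat: the input is a CNF formula in which every clause has exactly two literals (all clause weights 1); the goal is an assignment maximizing the number of satisfied clauses. Online: variables arrive one at a time in adversarial order, each with a data item, and must be irrevocably assigned upon arrival. In input model 2, the data item of a variable consists of the names (and weights) of the clauses in which it appears positively and those in which it appears negatively, the length of each such clause, and for each such clause the names of the other variables occurring in it (but not the signs of those other variables). Width-cut-$k$ model: the algorithm maintains a tree of partial assignments, the root being the empty assignment at level 0; when the $i$-th variable is processed each node at level $i-1$ may get any number of children (including zero, i.e. be cut), each extending it by a value for that variable; at most $k$ nodes may exist at each level; at the end the best complete assignment is output. The asymptotic approximation ratio of $\mathbb{A}$ is $\liminf_{n}\inf_{I\in\mathcal{I}_n} v(\mathbb{A},I)/v(I)$, where $\mathcal{I}_n$ are the instances of size $n$, $v(\mathbb{A},I)$ is the algorithm's value and $v(I)$ the optimum. *)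

theory Defs
  imports "HOL-Analysis.Analysis"
begin

(* Variables and clause names are natural numbers.
   A literal is (variable, sign); sign True = positive occurrence. *)
type_synonym lit = "nat \<times> bool"

(* An exact max-2-sat instance presented online:
     xs  : the variables in their (adversarial) order of arrival (distinct);
     C   : the finite set of clause names;
     cl  : clause name \<mapsto> its two literals (on two distinct variables).
   All clause weights are 1 (unweighted).  The size n of the instance is length xs. *)
definition wf_instance :: "nat list \<Rightarrow> nat set \<Rightarrow> (nat \<Rightarrow> lit \<times> lit) \<Rightarrow> bool" where
  "wf_instance xs C cl \<longleftrightarrow> distinct xs \<and> finite C \<and>
     (\<forall>c\<in>C. fst (fst (cl c)) \<in> set xs \<and> fst (snd (cl c)) \<in> set xs \<and>
             fst (fst (cl c)) \<noteq> fst (snd (cl c)))"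

definition lit_sat :: "(nat \<Rightarrow> bool) \<Rightarrow> lit \<Rightarrow> bool" where
  "lit_sat a l \<longleftrightarrow> a (fst l) = snd l"

definition num_sat :: "(nat \<Rightarrow> bool) \<Rightarrow> nat set \<Rightarrow> (nat \<Rightarrow> lit \<times> lit) \<Rightarrow> nat" where
  "num_sat a C cl = card {c\<in>C. lit_sat a (fst (cl c)) \<or> lit_sat a (snd (cl c))}"

definition opt_val :: "nat set \<Rightarrow> (nat \<Rightarrow> lit \<times> lit) \<Rightarrow> nat" where
  "opt_val C cl = Max ((\<lambda>a. num_sat a C cl) ` UNIV)"

(* Input model 2.  An occurrence record of a clause containing the variable:
   (clause name, clause weight, clause length, names of the other variables of the clause).
   The signs of the other variables are NOT revealed. *)
type_synonym occ = "nat \<times> nat \<times> nat \<times> nat set"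

(* data item of a variable: (its name, occurrences as positive literal, occurrences as negative literal) *)
type_synonym data_item = "nat \<times> occ set \<times> occ set"

definition occs :: "nat set \<Rightarrow> (nat \<Rightarrow> lit \<times> lit) \<Rightarrow> nat \<Rightarrow> bool \<Rightarrow> occ set" where
  "occs C cl x s =
     {(c, 1, 2, {fst (snd (cl c))}) | c. c \<in> C \<and> fst (cl c) = (x, s)} \<union>
     {(c, 1, 2, {fst (fst (cl c))}) | c. c \<in> C \<and> snd (cl c) = (x, s)}"

definition data_item :: "nat set \<Rightarrow> (nat \<Rightarrow> lit \<times> lit) \<Rightarrow> nat \<Rightarrow> data_item" where
  "data_item C cl x = (x, occs C cl x True, occs C cl x False)"

(* A deterministic online width-cut algorithm is given by the map sending the sequence
   d_1..d_i of data items received so far to the set of nodes of level i of its tree of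
   partial assignments, a node being the list of values given to the first i variables.
   (Being a function of the prefix only encodes that decisions are online/irrevocable.) *)
type_synonym wc_alg = "data_item list \<Rightarrow> bool list set"

definition width_cut_alg :: "(nat \<Rightarrow> nat) \<Rightarrow> wc_alg \<Rightarrow> bool" where
  "width_cut_alg k A \<longleftrightarrow>
     (\<forall>xs C cl. wf_instance xs C cl \<longrightarrow>
        (let ds = map (data_item C cl) xs; n = length xs in
           A [] = {[]} \<and>
           (\<forall>i<n. \<forall>b\<in>A (take (Suc i) ds). length b = Suc i \<and> butlast b \<in> A (take i ds)) \<and>
           (\<forall>i\<le>n. card (A (take i ds)) \<le> k n)))"

(* complete assignment described by a leaf b: the j-th arriving variable gets value b!j *)
definition leaf_assign :: "nat list \<Rightarrow> bool list \<Rightarrow> nat \<Rightarrow> bool" where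
  "leaf_assign xs b v = (case map_of (zip xs b) v of Some t \<Rightarrow> t | None \<Rightarrow> False)"

(* v(A,I): value of the best complete assignment in the final level (0 if all nodes were cut) *)
definition alg_val :: "wc_alg \<Rightarrow> nat list \<Rightarrow> nat set \<Rightarrow> (nat \<Rightarrow> lit \<times> lit) \<Rightarrow> nat" where
  "alg_val A xs C cl =
     Max (insert 0 ((\<lambda>b. num_sat (leaf_assign xs b) C cl) ` A (map (data_item C cl) xs)))"

(* v(A,I)/v(I), with the convention that the ratio is 1 when v(I) = 0 (no clauses) *)
definition inst_ratio :: "wc_alg \<Rightarrow> nat list \<Rightarrow> nat set \<Rightarrow> (nat \<Rightarrow> lit \<times> lit) \<Rightarrow> real" where
  "inst_ratio A xs C cl =
     (if opt_val C cl = 0 then 1 else real (alg_val A xs C cl) / real (opt_val C cl))"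

definition worst_ratio :: "wc_alg \<Rightarrow> nat \<Rightarrow> real" where
  "worst_ratio A n =
     (INF I \<in> {(xs, C, cl). wf_instance xs C cl \<and> length xs = n}.
        (case I of (xs, C, cl) \<Rightarrow> inst_ratio A xs C cl))"

definition asymp_ratio :: "wc_alg \<Rightarrow> ereal" where
  "asymp_ratio A = liminf (\<lambda>n. ereal (worst_ratio A n))"

end

theory Submission
  imports Defs "HOL-Real_Asymp.Real_Asymp"
begin

(* The adversary presents x_0, ..., x_m with the 2m clauses x_i \<or> \<plusminus>x_m, \<not>x_i \<or> \<mp>x_m (i < m), the
   signs of x_m encoding a set R; all 2m clauses can be satisfied. In input model 2 the data items of
   x_0, ..., x_{m-1} do not depend on R, so the at most k nodes a at level m are fixed before R is
   chosen. Completing a with x_m := True loses one clause for every i where a agrees with R, and with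
   x_m := False one for every i where it disagrees. For a fixed node, a Chernoff bound shows that at
   most 2 q^m of the 2^m sets R (some q < 2) give fewer than (1/2 - \<eta>) m agreements or disagreements;
   if k < e^(\<delta> n) a union bound leaves an R balanced against every node, and then the algorithm
   satisfies at most (3/2 + \<eta>) m clauses. *)

(* Clause 2i is x_i \<or> (x_m if i \<in> R else \<not>x_m), clause 2i+1 is \<not>x_i \<or> (x_m if i \<notin> R else \<not>x_m). *)
definition hard_cl :: "nat \<Rightarrow> nat set \<Rightarrow> nat \<Rightarrow> lit \<times> lit" where
  "hard_cl m R c = ((c div 2, even c), (m, even c = (c div 2 \<in> R)))"

definition agree_set :: "nat \<Rightarrow> bool list \<Rightarrow> nat set \<Rightarrow> nat set" where
  "agree_set m a R = {i. i < m \<and> a ! i = (i \<in> R)}"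

lemma hard_cl_even: "hard_cl m R (2 * i) = ((i, True), (m, i \<in> R))"
  by (simp add: hard_cl_def)

lemma hard_cl_odd: "hard_cl m R (Suc (2 * i)) = ((i, False), (m, i \<notin> R))"
  by (simp add: hard_cl_def)

lemma wf_instance_hard: "wf_instance [0..<Suc m] {..<2 * m} (hard_cl m R)"
  unfolding wf_instance_def hard_cl_def by auto

lemma data_item_hard_cl:
  assumes "i < m"
  shows "data_item {..<2 * m} (hard_cl m R) i = data_item {..<2 * m} (hard_cl m {}) i"
proof -
  have "occs {..<2 * m} (hard_cl m R) i s = occs {..<2 * m} (hard_cl m {}) i s" for s
    using assms unfolding occs_def by (simp add: hard_cl_def)
  then show ?thesis
    unfolding data_item_def by simp
qed

lemma take_data_items_hard_cl:
  "take m (map (data_item {..<2 * m} (hard_cl m R)) [0..<Suc m])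
     = map (data_item {..<2 * m} (hard_cl m {})) [0..<m]"
proof -
  have "take m (map (data_item {..<2 * m} (hard_cl m R)) [0..<Suc m])
        = map (data_item {..<2 * m} (hard_cl m R)) [0..<m]"
    by (simp del: upt_Suc add: take_map)
  also have "\<dots> = map (data_item {..<2 * m} (hard_cl m {})) [0..<m]"
    by (rule map_cong[OF refl], rule data_item_hard_cl) simp
  finally show ?thesis .
qed

lemma leaf_assign_upt:
  assumes "length b = n" "v < n"
  shows "leaf_assign [0..<n] b v = b ! v"
proof -
  have "map_of (zip [0..<n] b) ([0..<n] ! v) = Some (b ! v)"
    using assms by (intro map_of_zip_nth) auto
  then show ?thesis
    using assms(2) unfolding leaf_assign_def by simp
qed

lemma num_sat_hard_cl_le:
  "num_sat a {..<2 * m} (hard_cl m R) + card (if a m then {i. i < m \<and> a i = (i \<in> R)}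
     else {i. i < m \<and> a i \<noteq> (i \<in> R)}) \<le> 2 * m"
proof -
  define M where "M = (if a m then {i. i < m \<and> a i = (i \<in> R)} else {i. i < m \<and> a i \<noteq> (i \<in> R)})"
  define Sat where "Sat = {c \<in> {..<2 * m}. lit_sat a (fst (hard_cl m R c)) \<or> lit_sat a (snd (hard_cl m R c))}"
  define f where "f i = (if a i then Suc (2 * i) else 2 * i)" for i
  have "f i div 2 = i" for i
    by (simp add: f_def)
  then have "inj_on f M"
    by (metis inj_onI)
  moreover have "f ` M \<subseteq> {..<2 * m} - Sat"
  proof
    fix c assume "c \<in> f ` M"
    then obtain i where i: "i \<in> M" "c = f i"
      by blast
    \<comment> \<open>the clause \<open>f i\<close> wants \<open>x\<^sub>i\<close> and \<open>x\<^sub>m\<close> to take the values they do not have\<close>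
    have "\<not> lit_sat a (fst (hard_cl m R (f i))) \<and> \<not> lit_sat a (snd (hard_cl m R (f i)))"
      using i(1) by (cases "a i"; cases "a m") (simp_all add: f_def M_def hard_cl_even hard_cl_odd lit_sat_def)
    moreover have "c < 2 * m"
      using i by (auto simp: f_def M_def split: if_splits)
    ultimately show "c \<in> {..<2 * m} - Sat"
      using i(2) by (simp add: Sat_def)
  qed
  ultimately have "card M \<le> card ({..<2 * m} - Sat)"
    by (intro card_inj_on_le) auto
  moreover have "Sat \<subseteq> {..<2 * m}"
    by (auto simp: Sat_def)
  then have "card ({..<2 * m} - Sat) = 2 * m - card Sat" "card Sat \<le> 2 * m"
    using card_mono[of "{..<2 * m}" Sat] by (simp_all add: card_Diff_subset finite_subset)
  ultimately show ?thesis
    unfolding num_sat_def Sat_def[symmetric] M_def[symmetric] by linarith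
qed

lemma num_sat_hard_cl_opt: "num_sat (\<lambda>v. v < m \<and> v \<in> R) {..<2 * m} (hard_cl m R) = 2 * m"
proof -
  have "lit_sat (\<lambda>v. v < m \<and> v \<in> R) (fst (hard_cl m R c))
        \<or> lit_sat (\<lambda>v. v < m \<and> v \<in> R) (snd (hard_cl m R c))" if "c < 2 * m" for c
    using that by (auto simp: hard_cl_def lit_sat_def)
  then show ?thesis
    unfolding num_sat_def by (simp add: Collect_conj_eq Int_absorb2 subset_eq)
qed

lemma num_sat_le_card: "finite C \<Longrightarrow> num_sat a C cl \<le> card C"
  unfolding num_sat_def by (rule card_mono) auto

lemma opt_val_hard_cl: "opt_val {..<2 * m} (hard_cl m R) = 2 * m"
  unfolding opt_val_def
proof (rule Max_eqI)
  have le: "num_sat a {..<2 * m} (hard_cl m R) \<le> 2 * m" for a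
    using num_sat_le_card[of "{..<2 * m}"] by simp
  then have "range (\<lambda>a. num_sat a {..<2 * m} (hard_cl m R)) \<subseteq> {..2 * m}"
    by blast
  then show "finite (range (\<lambda>a. num_sat a {..<2 * m} (hard_cl m R)))"
    by (rule finite_subset) simp
  show "y \<le> 2 * m" if "y \<in> range (\<lambda>a. num_sat a {..<2 * m} (hard_cl m R))" for y
    using that le by blast
  have "num_sat (\<lambda>v. v < m \<and> v \<in> R) {..<2 * m} (hard_cl m R)
        \<in> range (\<lambda>a. num_sat a {..<2 * m} (hard_cl m R))"
    by (rule rangeI)
  then show "2 * m \<in> range (\<lambda>a. num_sat a {..<2 * m} (hard_cl m R))"
    by (subst (asm) num_sat_hard_cl_opt)
qed

lemma lessThan_diff_agree_set: "{..<m} - agree_set m a R = agree_set m a ({..<m} - R)"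
  by (auto simp: agree_set_def)

lemma inj_on_agree_set: "inj_on (agree_set m a) (Pow {..<m})"
proof (rule inj_onI)
  fix R1 R2 assume R: "R1 \<in> Pow {..<m}" "R2 \<in> Pow {..<m}" "agree_set m a R1 = agree_set m a R2"
  have "i \<in> R1 \<longleftrightarrow> i \<in> R2" if "i < m" for i
    using that arg_cong[OF R(3), of "\<lambda>D. i \<in> D"] by (auto simp: agree_set_def)
  then show "R1 = R2"
    using R(1,2) by blast
qed

lemma card_small_agree_sets_le:
  "card {R \<in> Pow {..<m}. real (card (agree_set m a R)) < t}
     \<le> card {D \<in> Pow {..<m}. real (card D) < t}"
  by (rule card_inj_on_le[OF inj_on_subset[OF inj_on_agree_set]]) (auto simp: agree_set_def)

lemma card_small_disagree_sets_le:
  "card {R \<in> Pow {..<m}. real (card ({..<m} - agree_set m a R)) < t}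
     \<le> card {D \<in> Pow {..<m}. real (card D) < t}"
proof -
  have "inj_on (\<lambda>R. {..<m} - R) (Pow {..<m})"
    by (rule inj_onI) blast
  then have "inj_on (agree_set m a \<circ> (\<lambda>R. {..<m} - R)) (Pow {..<m})"
    by (rule comp_inj_on) (auto intro: inj_on_subset[OF inj_on_agree_set])
  then show ?thesis
    unfolding lessThan_diff_agree_set
    by (intro card_inj_on_le[where f = "\<lambda>R. agree_set m a ({..<m} - R)"])
       (auto simp: o_def agree_set_def intro: inj_on_subset)
qed

text \<open>Union bound: each node of \<open>S\<close> rules out at most twice as many sets \<open>R\<close> as there are small subsets.\<close>
lemma exists_balanced_set:
  assumes "finite S"
    and "real (card S) * 2 * real (card {D \<in> Pow {..<m}. real (card D) < t}) < 2 ^ m"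
  obtains R where "\<forall>a\<in>S. t \<le> real (card (agree_set m a R)) \<and> t \<le> real (card ({..<m} - agree_set m a R))"
proof -
  define T where "T = card {D \<in> Pow {..<m}. real (card D) < t}"
  define Bad where "Bad a = {R \<in> Pow {..<m}. real (card (agree_set m a R)) < t}
      \<union> {R \<in> Pow {..<m}. real (card ({..<m} - agree_set m a R)) < t}" for a
  have "card (Bad a) \<le> 2 * T" for a
    using card_Un_le[of "{R \<in> Pow {..<m}. real (card (agree_set m a R)) < t}"
        "{R \<in> Pow {..<m}. real (card ({..<m} - agree_set m a R)) < t}"]
      card_small_agree_sets_le[of m a t] card_small_disagree_sets_le[of m a t]
    unfolding Bad_def T_def by linarith
  then have "card (\<Union>a\<in>S. Bad a) \<le> card S * (2 * T)"
    using card_UN_le[OF assms(1), of Bad] sum_mono[of S "\<lambda>a. card (Bad a)" "\<lambda>_. 2 * T"] by simp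
  then have "real (card (\<Union>a\<in>S. Bad a)) \<le> real (card S * (2 * T))"
    by (simp only: of_nat_le_iff)
  also have "\<dots> = real (card S) * 2 * real T"
    by simp
  also have "\<dots> < card (Pow {..<m::nat})"
    using assms(2) by (simp add: T_def card_Pow)
  finally have "card (\<Union>a\<in>S. Bad a) < card (Pow {..<m::nat})"
    by linarith
  then have "\<not> Pow {..<m} \<subseteq> (\<Union>a\<in>S. Bad a)"
    using assms(1) card_mono[of "\<Union>a\<in>S. Bad a" "Pow {..<m}"] by (auto simp: Bad_def)
  then obtain R where "R \<notin> (\<Union>a\<in>S. Bad a)" "R \<in> Pow {..<m}"
    by blast
  then show thesis
    by (intro that) (auto simp: Bad_def not_less)
qed

lemma width_cut_algD:
  assumes "width_cut_alg k A" "wf_instance xs C cl"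
  shows "A [] = {[]}"
    and "i < length xs \<Longrightarrow> b \<in> A (take (Suc i) (map (data_item C cl) xs))
           \<Longrightarrow> length b = Suc i \<and> butlast b \<in> A (take i (map (data_item C cl) xs))"
    and "i \<le> length xs \<Longrightarrow> card (A (take i (map (data_item C cl) xs))) \<le> k (length xs)"
  using assms unfolding width_cut_alg_def Let_def by (simp_all del: take_map)

lemma width_cut_level_length:
  assumes "width_cut_alg k A" "wf_instance xs C cl" "i \<le> length xs"
    and "b \<in> A (take i (map (data_item C cl) xs))"
  shows "length b = i"
proof (cases i)
  case 0
  then show ?thesis
    using assms width_cut_algD(1)[OF assms(1,2)] by simp
next
  case (Suc j)
  then show ?thesis
    using assms width_cut_algD(2)[OF assms(1,2), of j b] by simp
qed

lemma width_cut_level_finite: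
  assumes "width_cut_alg k A" "wf_instance xs C cl" "i \<le> length xs"
  shows "finite (A (take i (map (data_item C cl) xs)))"
proof (rule finite_subset)
  show "A (take i (map (data_item C cl) xs)) \<subseteq> {b. set b \<subseteq> (UNIV :: bool set) \<and> length b = i}"
    using width_cut_level_length[OF assms] by auto
  show "finite {b. set b \<subseteq> (UNIV :: bool set) \<and> length b = i}"
    by (rule finite_lists_length_eq) simp
qed

lemma worst_ratio_le_inst_ratio:
  assumes "wf_instance xs C cl"
  shows "worst_ratio A (length xs) \<le> inst_ratio A xs C cl"
proof -
  have "bdd_below ((\<lambda>(xs, C, cl). inst_ratio A xs C cl) ` {(xs, C, cl). wf_instance xs C cl \<and> length xs = n})" for n
    by (rule bdd_belowI[where m = 0]) (auto simp: inst_ratio_def)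
  then show ?thesis
    unfolding worst_ratio_def using assms by (force intro: cINF_lower2)
qed

lemma alg_val_le:
  assumes "finite (A (map (data_item C cl) xs))" "0 \<le> r"
    and "\<And>b. b \<in> A (map (data_item C cl) xs) \<Longrightarrow> real (num_sat (leaf_assign xs b) C cl) \<le> r"
  shows "real (alg_val A xs C cl) \<le> r"
  using assms Max_in[of "insert 0 ((\<lambda>b. num_sat (leaf_assign xs b) C cl) ` A (map (data_item C cl) xs))"]
  unfolding alg_val_def by auto

text \<open>Level \<open>m\<close> of the tree does not depend on \<open>R\<close>; whatever value \<open>x\<^sub>m\<close> then gets, \<open>t\<close> clauses are lost.\<close>
lemma alg_val_hard_cl_le:
  assumes wc: "width_cut_alg k A" and "t \<le> real m"
    and balanced: "\<forall>a\<in>A (map (data_item {..<2 * m} (hard_cl m {})) [0..<m]).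
        t \<le> real (card (agree_set m a R)) \<and> t \<le> real (card ({..<m} - agree_set m a R))"
  shows "real (alg_val A [0..<Suc m] {..<2 * m} (hard_cl m R)) \<le> 2 * real m - t"
proof -
  let ?ds = "map (data_item {..<2 * m} (hard_cl m R)) [0..<Suc m]"
  note wf = wf_instance_hard[of m R]
  have leaves: "length b = Suc m" "butlast b \<in> A (map (data_item {..<2 * m} (hard_cl m {})) [0..<m])"
    if "b \<in> A ?ds" for b
    using width_cut_algD(2)[OF wc wf, of m b] that take_data_items_hard_cl[of m R]
    by (simp_all del: upt_Suc)
  show ?thesis
  proof (rule alg_val_le)
    show "finite (A ?ds)"
      using width_cut_level_finite[OF wc wf, of "Suc m"] by (simp del: upt_Suc)
    show "0 \<le> 2 * real m - t"
      using assms(2) by simp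
  next
    fix b assume b: "b \<in> A ?ds"
    let ?a = "leaf_assign [0..<Suc m] b"
    have "agree_set m (butlast b) R = {i. i < m \<and> ?a i = (i \<in> R)}"
      and "{..<m} - agree_set m (butlast b) R = {i. i < m \<and> ?a i \<noteq> (i \<in> R)}"
      using leaves(1)[OF b] by (auto simp: agree_set_def leaf_assign_upt nth_butlast simp del: upt_Suc)
    then have "t \<le> real (card (if ?a m then {i. i < m \<and> ?a i = (i \<in> R)} else {i. i < m \<and> ?a i \<noteq> (i \<in> R)}))"
      using balanced leaves(2)[OF b] by auto
    then show "real (num_sat ?a {..<2 * m} (hard_cl m R)) \<le> 2 * real m - t"
      using num_sat_hard_cl_le[of ?a m R] by linarith
  qed
qed

lemma worst_ratio_hard_le:
  assumes "width_cut_alg k A" "1 \<le> m" "t \<le> real m"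
    and "\<forall>a\<in>A (map (data_item {..<2 * m} (hard_cl m {})) [0..<m]).
        t \<le> real (card (agree_set m a R)) \<and> t \<le> real (card ({..<m} - agree_set m a R))"
  shows "worst_ratio A (Suc m) \<le> (2 * real m - t) / (2 * real m)"
proof -
  have "worst_ratio A (Suc m) \<le> inst_ratio A [0..<Suc m] {..<2 * m} (hard_cl m R)"
    using worst_ratio_le_inst_ratio[OF wf_instance_hard[of m R]] by (simp del: upt_Suc)
  also have "\<dots> = real (alg_val A [0..<Suc m] {..<2 * m} (hard_cl m R)) / (2 * real m)"
    using assms(2) by (simp add: inst_ratio_def opt_val_hard_cl)
  also have "\<dots> \<le> (2 * real m - t) / (2 * real m)"
    using alg_val_hard_cl_le[OF assms(1,3,4)] by (simp add: divide_right_mono)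
  finally show ?thesis .
qed

lemma worst_ratio_le_if_few_small_sets:
  assumes wc: "width_cut_alg k A" and "1 \<le> m" "t \<le> real m"
    and few: "real (k (Suc m)) * 2 * real (card {D \<in> Pow {..<m}. real (card D) < t}) < 2 ^ m"
  shows "worst_ratio A (Suc m) \<le> (2 * real m - t) / (2 * real m)"
proof -
  let ?S = "A (map (data_item {..<2 * m} (hard_cl m {})) [0..<m])"
  note wf = wf_instance_hard[of m "{}"]
  have "?S = A (take m (map (data_item {..<2 * m} (hard_cl m {})) [0..<Suc m]))"
    using take_data_items_hard_cl[of m "{}"] by simp
  then have "finite ?S" "card ?S \<le> k (Suc m)"
    using width_cut_level_finite[OF wc wf, of m] width_cut_algD(3)[OF wc wf, of m] by simp_all
  then have "real (card ?S) * 2 * real (card {D \<in> Pow {..<m}. real (card D) < t})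
             \<le> real (k (Suc m)) * 2 * real (card {D \<in> Pow {..<m}. real (card D) < t})"
    by (intro mult_right_mono) auto
  then have "real (card ?S) * 2 * real (card {D \<in> Pow {..<m}. real (card D) < t}) < 2 ^ m"
    using few by linarith
  then obtain R where "\<forall>a\<in>?S. t \<le> real (card (agree_set m a R)) \<and> t \<le> real (card ({..<m} - agree_set m a R))"
    using exists_balanced_set[OF \<open>finite ?S\<close>] by blast
  then show ?thesis
    using worst_ratio_hard_le[OF wc assms(2,3)] by blast
qed

lemma sum_power_card_Pow:
  fixes x :: "'a :: comm_semiring_1"
  assumes "finite U"
  shows "(\<Sum>D\<in>Pow U. x ^ card D) = (1 + x) ^ card U"
  using prod_add[OF assms, of "\<lambda>_. x" "\<lambda>_. 1"] by (simp add: add.commute)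

text \<open>Chernoff-type bound, by comparing with the generating function \<open>(1 + x) ^ card U\<close>.\<close>
lemma card_small_subsets_le:
  fixes x t :: real
  assumes "finite U" "0 < x" "x \<le> 1"
  shows "real (card {D \<in> Pow U. real (card D) < t}) * x powr t \<le> (1 + x) ^ card U"
proof -
  have "real (card {D \<in> Pow U. real (card D) < t}) * x powr t
        = (\<Sum>D\<in>{D \<in> Pow U. real (card D) < t}. x powr t)"
    by simp
  also have "\<dots> \<le> (\<Sum>D\<in>{D \<in> Pow U. real (card D) < t}. x ^ card D)"
    using assms by (intro sum_mono) (auto simp: powr_realpow[symmetric] intro: powr_mono')
  also have "\<dots> \<le> (\<Sum>D\<in>Pow U. x ^ card D)"
    using assms by (intro sum_mono2) auto
  also have "\<dots> = (1 + x) ^ card U"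
    using sum_power_card_Pow[OF assms(1)] .
  finally show ?thesis .
qed

lemma chernoff_base_lt_two:
  fixes \<eta> :: real
  assumes "0 < \<eta>" "\<eta> \<le> 1/2"
  shows "(1 + (1 - \<eta>)\<^sup>2) / ((1 - \<eta>)\<^sup>2) powr (1/2 - \<eta>) < 2"
proof -
  define s where "s = 1 - \<eta>"
  have s: "0 < s" "s < 1"
    using assms by (auto simp: s_def)
  have "(s\<^sup>2) powr (1/2 - \<eta>) = (s powr 2) powr (1/2 - \<eta>)"
    using s by simp
  also have "\<dots> = s powr (1 - 2 * \<eta>)"
    by (simp only: powr_powr) (simp add: algebra_simps)
  also have "s powr (1 - 2 * \<eta>) = s / s powr (2 * \<eta>)"
    using s by (simp add: powr_diff)
  finally have "(s\<^sup>2) powr (1/2 - \<eta>) * s powr (2 * \<eta>) = s"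
    using s by simp
  then have split: "(1 + s\<^sup>2) / (s\<^sup>2) powr (1/2 - \<eta>) = (1 + s\<^sup>2) * s powr (2 * \<eta>) / s"
    using s by (simp add: field_simps)
  have "s powr (2 * \<eta>) * 1 powr (1 - 2 * \<eta>) \<le> 2 * \<eta> * s + (1 - 2 * \<eta>) * 1"
    using assms s by (intro Youngs_inequality_0) auto
  then have young: "s powr (2 * \<eta>) \<le> 1 - 2 * \<eta>\<^sup>2"
    by (simp add: s_def power2_eq_square algebra_simps)
  have "2 * s - (1 + s\<^sup>2) * (1 - 2 * \<eta>\<^sup>2) = \<eta>\<^sup>2 * (1 + 2 * s\<^sup>2)"
    by (simp add: s_def power2_eq_square algebra_simps)
  moreover have "0 < \<eta>\<^sup>2 * (1 + 2 * s\<^sup>2)"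
    using assms by (intro mult_pos_pos) (auto intro: add_pos_nonneg)
  moreover have "(1 + s\<^sup>2) * s powr (2 * \<eta>) \<le> (1 + s\<^sup>2) * (1 - 2 * \<eta>\<^sup>2)"
    using young by (intro mult_left_mono) auto
  ultimately have "(1 + s\<^sup>2) * s powr (2 * \<eta>) / s < 2"
    using s by (simp add: pos_divide_less_eq)
  then show ?thesis
    using split by (simp add: s_def)
qed

lemma few_small_subsets:
  fixes \<eta> :: real
  assumes "0 < \<eta>" "\<eta> \<le> 1/2"
  obtains q where "0 < q" "q < 2"
    and "\<And>m. real (card {D \<in> Pow {..<m}. real (card D) < (1/2 - \<eta>) * real m}) \<le> q ^ m"
proof
  define x where "x = (1 - \<eta>)\<^sup>2"
  have x: "0 < x" "x \<le> 1"
    using assms by (auto simp: x_def power_le_one)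
  show "0 < (1 + x) / x powr (1/2 - \<eta>)"
    using x by (intro divide_pos_pos) auto
  show "(1 + x) / x powr (1/2 - \<eta>) < 2"
    using chernoff_base_lt_two[OF assms] by (simp add: x_def)
  fix m
  have "x powr ((1/2 - \<eta>) * real m) = (x powr (1/2 - \<eta>)) ^ m"
    using x by (simp add: powr_powr[symmetric] powr_realpow)
  then have "real (card {D \<in> Pow {..<m}. real (card D) < (1/2 - \<eta>) * real m}) * (x powr (1/2 - \<eta>)) ^ m
             \<le> (1 + x) ^ m"
    using card_small_subsets_le[of "{..<m}" x "(1/2 - \<eta>) * real m"] x by simp
  then show "real (card {D \<in> Pow {..<m}. real (card D) < (1/2 - \<eta>) * real m})
             \<le> ((1 + x) / x powr (1/2 - \<eta>)) ^ m"
    using x by (simp add: power_divide pos_le_divide_eq)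
qed

lemma exp_mult_power_le_two_power:
  fixes q \<delta> :: real
  assumes "0 < q" "\<delta> = ln (2 / q) / 2" "ln 2 + \<delta> \<le> \<delta> * real m"
  shows "exp (\<delta> * real (Suc m)) * 2 * q ^ m \<le> 2 ^ m"
proof -
  have "exp (2 * \<delta>) = exp (ln (2 / q))"
    using assms(2) by simp
  also have "\<dots> = 2 / q"
    using assms(1) by simp
  finally have "exp (- (2 * \<delta>)) = q / 2"
    by (simp add: exp_minus)
  then have "(q / 2) ^ m = exp (real m * - (2 * \<delta>))"
    by (simp only: exp_of_nat_mult)
  then have "exp (\<delta> * real (Suc m)) * 2 * q ^ m
             = 2 ^ m * (exp (\<delta> * real (Suc m)) * exp (ln 2) * exp (real m * - (2 * \<delta>)))"
    by (simp add: power_divide divide_eq_eq mult.commute)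
  also have "\<dots> = 2 ^ m * exp (ln 2 + \<delta> - \<delta> * real m)"
    unfolding exp_add[symmetric] by (simp add: algebra_simps)
  also have "\<dots> \<le> 2 ^ m"
    using assms(3) by simp
  finally show ?thesis .
qed

lemma worst_ratio_eventually_le:
  fixes \<eta> q \<delta> :: real
  assumes wc: "width_cut_alg k A" and "0 < \<eta>" "0 < q"
    and few: "\<And>m. real (card {D \<in> Pow {..<m}. real (card D) < (1/2 - \<eta>) * real m}) \<le> q ^ m"
    and \<delta>: "\<delta> = ln (2 / q) / 2" "0 < \<delta>"
    and width: "\<forall>\<^sub>F n in sequentially. real (k n) < exp (\<delta> * real n)"
  shows "\<forall>\<^sub>F n in sequentially. worst_ratio A n \<le> 3/4 + \<eta>/2"
proof -
  have "\<forall>\<^sub>F m in sequentially. ln 2 + \<delta> \<le> \<delta> * real m"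
    using \<delta>(2) by real_asymp
  moreover have "\<forall>\<^sub>F m in sequentially. real (k (Suc m)) < exp (\<delta> * real (Suc m))"
    using width by (rule eventually_sequentially_Suc[THEN iffD2])
  ultimately have "\<forall>\<^sub>F m in sequentially. worst_ratio A (Suc m) \<le> 3/4 + \<eta>/2"
  proof (rule eventually_elim2)
    fix m assume large: "ln 2 + \<delta> \<le> \<delta> * real m" and km: "real (k (Suc m)) < exp (\<delta> * real (Suc m))"
    let ?t = "(1/2 - \<eta>) * real m"
    have "0 < \<delta> * real m"
      using large \<delta>(2) ln_gt_zero[of "2::real"] by linarith
    then have "1 \<le> m"
      by (cases m) simp_all
    have "real (k (Suc m)) * 2 * real (card {D \<in> Pow {..<m}. real (card D) < ?t})
          \<le> real (k (Suc m)) * 2 * q ^ m"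
      using few by (intro mult_left_mono) auto
    also have "\<dots> < exp (\<delta> * real (Suc m)) * 2 * q ^ m"
      using km \<open>0 < q\<close> by (intro mult_strict_right_mono) auto
    also have "\<dots> \<le> 2 ^ m"
      using exp_mult_power_le_two_power[OF \<open>0 < q\<close> \<delta>(1) large] .
    finally have "real (k (Suc m)) * 2 * real (card {D \<in> Pow {..<m}. real (card D) < ?t}) < 2 ^ m" .
    moreover have "?t \<le> real m"
      using mult_right_mono[of "1/2 - \<eta>" 1 "real m"] \<open>0 < \<eta>\<close> by simp
    ultimately have "worst_ratio A (Suc m) \<le> (2 * real m - ?t) / (2 * real m)"
      using worst_ratio_le_if_few_small_sets[OF wc \<open>1 \<le> m\<close>] by blast
    also have "\<dots> = 3/4 + \<eta>/2"
      using \<open>1 \<le> m\<close> by (simp add: field_simps)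
    finally show "worst_ratio A (Suc m) \<le> 3/4 + \<eta>/2" .
  qed
  then show ?thesis
    by (rule eventually_sequentially_Suc[THEN iffD1])
qed

theorem theorem2:
  fixes \<epsilon> :: real
  assumes "\<epsilon> > 0"
  shows "\<exists>\<delta>>0. \<forall>(k :: nat \<Rightarrow> nat) (A :: wc_alg).
           (\<forall>\<^sub>F n in sequentially. real (k n) < exp (\<delta> * real n)) \<longrightarrow>
           width_cut_alg k A \<longrightarrow>
           \<not> (asymp_ratio A \<ge> ereal (3/4 + \<epsilon>))"
proof -
  define \<eta> where "\<eta> = min \<epsilon> (1/2)"
  have \<eta>: "0 < \<eta>" "\<eta> \<le> 1/2" "\<eta> \<le> \<epsilon>"
    using assms by (auto simp: \<eta>_def)
  obtain q where q: "0 < q" "q < 2"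
    and few: "\<And>m. real (card {D \<in> Pow {..<m}. real (card D) < (1/2 - \<eta>) * real m}) \<le> q ^ m"
    using few_small_subsets[OF \<eta>(1,2)] by blast
  define \<delta> where "\<delta> = ln (2 / q) / 2"
  have "0 < \<delta>"
    using q by (simp add: \<delta>_def)
  moreover have "\<not> asymp_ratio A \<ge> ereal (3/4 + \<epsilon>)"
    if width: "\<forall>\<^sub>F n in sequentially. real (k n) < exp (\<delta> * real n)" and wc: "width_cut_alg k A"
    for k A
  proof -
    have "\<forall>\<^sub>F n in sequentially. worst_ratio A n \<le> 3/4 + \<eta>/2"
      using worst_ratio_eventually_le[OF wc \<eta>(1) q(1) few \<delta>_def \<open>0 < \<delta>\<close> width] .
    then have "asymp_ratio A \<le> ereal (3/4 + \<eta>/2)"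
      unfolding asymp_ratio_def by (intro Liminf_le) (auto elim: eventually_mono)
    moreover have "ereal (3/4 + \<eta>/2) < ereal (3/4 + \<epsilon>)"
      using \<eta> by simp
    ultimately show ?thesis
      by (meson not_le order_le_less_trans)
  qed
  ultimately show ?thesis
    by blast
qed

end
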